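(* Let $A$ and $G$ be selfadjoint operators in the Hilbert space $\mathcal H$. If $AG$ is bounded and everywhere defined, or $GA$ is bounded and everywhere defined, then either both $A$ and $G$ are bounded and everywhere defined, or the condition "$\rho(AG)\neq\emptyset$ and $\rho(GA)\neq\emptyset$" fails.
   Context: $(\mathcal H,(\cdot,\cdot))$ is a complex Hilbert space; $A,G$ are possibly unbounded selfadjoint operators; $AG$, $GA$ are the operator products with natural domains. For a linear operator $S$, $\rho(S)$ is the set of $\lambda\in\mathbb C$ such that $S-\lambda$ is injective, surjective and has a bounded everywhere defined inverse. *)

theory Defs
  imports "HOL-Analysis.Analysis"
begin

text \<open>HOL-Analysis has no complex inner product spaces, so we introduce a class:
a real Banach space with a compatible complex scalar multiplication and a complex
inner product (linear in the first argument) that induces the norm.\<close>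

class complex_hilbert = real_normed_vector + complete_space +
  fixes cscale :: "complex \<Rightarrow> 'a \<Rightarrow> 'a"
    and cinner :: "'a \<Rightarrow> 'a \<Rightarrow> complex"
  assumes cscale_add_right: "cscale a (x + y) = cscale a x + cscale a y"
    and cscale_add_left: "cscale (a + b) x = cscale a x + cscale b x"
    and cscale_cscale: "cscale a (cscale b x) = cscale (a * b) x"
    and cscale_one: "cscale 1 x = x"
    and scaleR_cscale: "scaleR r x = cscale (complex_of_real r) x"
    and cinner_cnj: "cinner x y = cnj (cinner y x)"
    and cinner_add_left: "cinner (x + y) z = cinner x z + cinner y z"
    and cinner_cscale_left: "cinner (cscale a x) y = a * cinner x y"
    and cinner_self_norm: "cinner x x = complex_of_real ((norm x)\<^sup>2)"

instantiation complex :: complex_hilbert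
begin
definition cscale_complex :: "complex \<Rightarrow> complex \<Rightarrow> complex" where
  "cscale_complex a x = a * x"
definition cinner_complex :: "complex \<Rightarrow> complex \<Rightarrow> complex" where
  "cinner_complex x y = x * cnj y"
instance
proof
  fix a b :: complex and x y z :: complex and r :: real
  show "cscale a (x + y) = cscale a x + cscale a y" by (simp add: cscale_complex_def algebra_simps)
  show "cscale (a + b) x = cscale a x + cscale b x" by (simp add: cscale_complex_def algebra_simps)
  show "cscale a (cscale b x) = cscale (a * b) x" by (simp add: cscale_complex_def)
  show "cscale 1 x = x" by (simp add: cscale_complex_def)
  show "scaleR r x = cscale (complex_of_real r) x" by (simp add: cscale_complex_def scaleR_conv_of_real)
  show "cinner x y = cnj (cinner y x)" by (simp add: cinner_complex_def)
  show "cinner (x + y) z = cinner x z + cinner y z" by (simp add: cinner_complex_def algebra_simps)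
  show "cinner (cscale a x) y = a * cinner x y" by (simp add: cinner_complex_def cscale_complex_def)
  show "cinner x x = complex_of_real ((norm x)\<^sup>2)" by (simp add: cinner_complex_def complex_mult_cnj cmod_def)
qed
end

text \<open>An operator is a pair (domain, action). Only its values on the domain matter.\<close>
type_synonym 'a op = "'a set \<times> ('a \<Rightarrow> 'a)"

definition dom_op :: "'a op \<Rightarrow> 'a set" where "dom_op T = fst T"
definition app_op :: "'a op \<Rightarrow> 'a \<Rightarrow> 'a" where "app_op T = snd T"

definition graph_op :: "'a op \<Rightarrow> ('a \<times> 'a) set" where
  "graph_op T = {(x, app_op T x) | x. x \<in> dom_op T}"

definition linear_op :: "'a::complex_hilbert op \<Rightarrow> bool" where
  "linear_op T \<longleftrightarrow> 0 \<in> dom_op T \<and>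
     (\<forall>x\<in>dom_op T. \<forall>y\<in>dom_op T. \<forall>a b. cscale a x + cscale b y \<in> dom_op T \<and>
        app_op T (cscale a x + cscale b y) = cscale a (app_op T x) + cscale b (app_op T y))"

definition densely_defined :: "'a::complex_hilbert op \<Rightarrow> bool" where
  "densely_defined T \<longleftrightarrow> closure (dom_op T) = UNIV"

definition adjoint_graph :: "'a::complex_hilbert op \<Rightarrow> ('a \<times> 'a) set" where
  "adjoint_graph T = {(y, z). \<forall>x\<in>dom_op T. cinner (app_op T x) y = cinner x z}"

definition selfadjoint :: "'a::complex_hilbert op \<Rightarrow> bool" where
  "selfadjoint T \<longleftrightarrow> linear_op T \<and> densely_defined T \<and> adjoint_graph T = graph_op T"

definition prod_op :: "'a op \<Rightarrow> 'a op \<Rightarrow> 'a op" where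
  "prod_op S T = ({x \<in> dom_op T. app_op T x \<in> dom_op S}, \<lambda>x. app_op S (app_op T x))"

definition bounded_everywhere :: "'a::complex_hilbert op \<Rightarrow> bool" where
  "bounded_everywhere T \<longleftrightarrow> dom_op T = UNIV \<and>
     (\<exists>K. \<forall>x. norm (app_op T x) \<le> K * norm x)"

definition resolvent_set :: "'a::complex_hilbert op \<Rightarrow> complex set" where
  "resolvent_set S = {l.
     inj_on (\<lambda>x. app_op S x - cscale l x) (dom_op S) \<and>
     (\<lambda>x. app_op S x - cscale l x) ` dom_op S = UNIV \<and>
     (\<exists>K. \<forall>x\<in>dom_op S. norm x \<le> K * norm (app_op S x - cscale l x))}"

end

theory Submission
  imports Defs
begin

(* Let A, G be selfadjoint and suppose AG is bounded and everywhere defined while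
   some l lies in the resolvent set of GA (the case with A and G exchanged is symmetric).
   Then both A and G are bounded and everywhere defined.  The proof has three steps.
   (1) Hellinger-Toeplitz: a symmetric operator defined on the whole space is bounded.
       We derive it from the fact that weakly bounded sets are bounded, which in turn
       follows from the Baire category theorem.  It applies to G since dom G = H.
   (2) GA is bounded on dom A: for w = GAx one has |w|^2 = (Ax, Gw) = (x, AGw) <= |x| |AG| |w|.
   (3) An operator which is bounded on its domain and has a bounded everywhere defined
       inverse has a closed domain.  Applied to GA - l this shows that dom A is closed;
       being dense it is the whole space, and (1) applies to A as well. *)

lemma cscale_minus_one: "cscale (-1) (x::'a::complex_hilbert) = - x"
  using scaleR_cscale[of "-1" x] by simp

lemma cscale_diff_right: "cscale a (x - y::'a::complex_hilbert) = cscale a x - cscale a y"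
proof -
  have "cscale a (x - y) + cscale a y = cscale a x"
    by (metis cscale_add_right diff_add_cancel)
  then show ?thesis by (simp add: eq_diff_eq)
qed

lemma cinner_add_right: "cinner (x::'a::complex_hilbert) (y + z) = cinner x y + cinner x z"
  by (metis cinner_add_left cinner_cnj complex_cnj_add)

lemma cinner_cscale_right: "cinner (x::'a::complex_hilbert) (cscale a y) = cnj a * cinner x y"
  by (metis cinner_cnj cinner_cscale_left complex_cnj_mult)

lemma cinner_scaleR_right: "cinner (x::'a::complex_hilbert) (scaleR r y) = of_real r * cinner x y"
  by (simp add: scaleR_cscale cinner_cscale_right)

lemma norm_cscale: "norm (cscale a (x::'a::complex_hilbert)) = cmod a * norm x"
proof -
  have "complex_of_real ((norm (cscale a x))\<^sup>2) = cinner (cscale a x) (cscale a x)"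
    by (rule cinner_self_norm[symmetric])
  also have "\<dots> = a * cnj a * cinner x x"
    by (simp add: cinner_cscale_left cinner_cscale_right)
  also have "\<dots> = complex_of_real ((cmod a)\<^sup>2) * complex_of_real ((norm x)\<^sup>2)"
    by (simp only: complex_norm_square[symmetric] of_real_power cinner_self_norm)
  finally have "(norm (cscale a x))\<^sup>2 = (cmod a * norm x)\<^sup>2"
    by (simp only: of_real_mult[symmetric] of_real_eq_iff power_mult_distrib)
  then show ?thesis
    by (simp add: power2_eq_iff_nonneg)
qed

section \<open>The real inner product and the Cauchy-Schwarz inequality\<close>

text \<open>The real part of the complex inner product is a real inner product inducing the
  norm; all estimates below are carried out with it.\<close>
definition rinner :: "'a::complex_hilbert \<Rightarrow> 'a \<Rightarrow> real" where
  "rinner x y = Re (cinner x y)"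

lemma rinner_sym: "rinner x y = rinner y x"
  unfolding rinner_def using cinner_cnj[of x y] by simp

lemma rinner_self: "rinner x x = (norm x)\<^sup>2"
  unfolding rinner_def by (simp add: cinner_self_norm)

lemma rinner_add_right: "rinner x (y + z) = rinner x y + rinner x z"
  unfolding rinner_def by (simp add: cinner_add_right)

lemma rinner_add_left: "rinner (x + y) z = rinner x z + rinner y z"
  using rinner_add_right rinner_sym by metis

lemma rinner_scaleR_right: "rinner x (scaleR r y) = r * rinner x y"
  unfolding rinner_def by (simp add: cinner_scaleR_right)

lemma rinner_scaleR_left: "rinner (scaleR r x) y = r * rinner x y"
  using rinner_scaleR_right rinner_sym by metis

lemma rinner_zero_left [simp]: "rinner 0 y = 0"
  using rinner_scaleR_left[of 0] by simp

lemma rinner_zero_right [simp]: "rinner x 0 = 0"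
  using rinner_sym rinner_zero_left by metis

lemma rinner_Cauchy_Schwarz: "\<bar>rinner x y\<bar> \<le> norm x * norm y"
proof -
  text \<open>Expand the squared norms of b x + s y for s = a and s = -a, where a = |x|, b = |y|.\<close>
  define a b where "a = norm x" and "b = norm y"
  have expand: "(norm (scaleR b x + scaleR s y))\<^sup>2 = 2 * a\<^sup>2 * b\<^sup>2 + 2 * s * b * rinner x y"
    if "\<bar>s\<bar> = a" for s
  proof -
    have "(norm (scaleR b x + scaleR s y))\<^sup>2
        = b\<^sup>2 * rinner x x + 2 * s * b * rinner x y + s\<^sup>2 * rinner y y"
      unfolding rinner_self[symmetric]
      by (simp add: rinner_add_left rinner_add_right rinner_scaleR_left rinner_scaleR_right
          rinner_sym[of y x] power2_eq_square algebra_simps)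
    also have "\<dots> = 2 * a\<^sup>2 * b\<^sup>2 + 2 * s * b * rinner x y"
      using that by (simp add: rinner_self a_def b_def power2_abs[of s, symmetric])
    finally show ?thesis .
  qed
  have nonneg: "0 \<le> 2 * a\<^sup>2 * b\<^sup>2 + 2 * s * b * rinner x y" if "\<bar>s\<bar> = a" for s
    using expand[OF that] by (metis zero_le_power2)
  have "0 \<le> 2 * a\<^sup>2 * b\<^sup>2 + 2 * a * b * rinner x y"
    using nonneg[of a] by (simp add: a_def)
  moreover have "0 \<le> 2 * a\<^sup>2 * b\<^sup>2 - 2 * a * b * rinner x y"
    using nonneg[of "-a"] by (simp add: a_def)
  ultimately have "a * b * \<bar>rinner x y\<bar> \<le> a * b * (a * b)"
    by (simp add: power2_eq_square abs_le_iff algebra_simps)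
  moreover have "a \<ge> 0" "b \<ge> 0" by (simp_all add: a_def b_def)
  ultimately show ?thesis
    by (cases "a * b = 0") (auto simp: a_def b_def)
qed

text \<open>Pairing with a fixed vector is a continuous functional; this makes the sets in the
  Baire argument below closed.\<close>
lemma bounded_linear_rinner_right: "bounded_linear (rinner (a::'a::complex_hilbert))"
proof (rule bounded_linear_intro)
  show "norm (rinner a x) \<le> norm x * norm a" for x
    using rinner_Cauchy_Schwarz[of a x] by (simp add: mult.commute)
qed (simp_all add: rinner_add_right rinner_scaleR_right)

section \<open>Weakly bounded sets are bounded; the Hellinger-Toeplitz theorem\<close>

text \<open>The closed sets F n of vectors paired
  by at most n with all of V cover the space, so by Baire one of them contains a ball, and
  testing v against a suitable multiple of itself inside that ball bounds the norm of v.\<close>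
lemma weakly_bounded_imp_bounded:
  fixes V :: "'a::complex_hilbert set"
  assumes weak: "\<And>y. \<exists>C. \<forall>v\<in>V. \<bar>rinner v y\<bar> \<le> C"
  shows "\<exists>K. \<forall>v\<in>V. norm v \<le> K"
proof -
  define F where "F n = {y. \<forall>v\<in>V. \<bar>rinner v y\<bar> \<le> real n}" for n :: nat
  have closed_F: "closed (F n)" for n
  proof -
    have "F n = (\<Inter>v\<in>V. {y. \<bar>rinner v y\<bar> \<le> real n})"
      unfolding F_def by auto
    moreover have "closed {y. \<bar>rinner v y\<bar> \<le> real n}" for v
      by (intro closed_Collect_le continuous_intros linear_continuous_on
          bounded_linear_rinner_right)
    ultimately show ?thesis by auto
  qed
  have cover: "\<Union>(range F) = UNIV"
  proof safe
    fix y
    obtain C where "\<forall>v\<in>V. \<bar>rinner v y\<bar> \<le> C" using weak by blast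
    then have "y \<in> F (nat \<lceil>C\<rceil>)"
      unfolding F_def by (auto intro: order.trans[OF _ real_nat_ceiling_ge])
    then show "y \<in> \<Union>(range F)" by blast
  qed simp
  obtain n where "interior (F n) \<noteq> {}"
  proof (rule ccontr)
    assume "\<not> thesis"
    then have "\<forall>n. interior (F n) = {}" using that by blast
    then have "euclidean interior_of \<Union>(range F) = {}"
      by (intro Baire_category_alt completely_metrizable_space_euclidean disjI1)
         (auto simp: closed_F)
    then show False using cover by simp
  qed
  then obtain y0 where "y0 \<in> interior (F n)" by blast
  then obtain r where r: "r > 0" "ball y0 r \<subseteq> F n"
    by (meson open_contains_ball interior_subset open_interior subset_trans)
  have small: "\<bar>rinner v z\<bar> \<le> 2 * real n" if "v \<in> V" "norm z < r" for v z
  proof -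
    have "y0 \<in> F n" "y0 + z \<in> F n" using r that by (auto simp: dist_norm)
    then have "\<bar>rinner v y0\<bar> \<le> real n" "\<bar>rinner v (y0 + z)\<bar> \<le> real n"
      using \<open>v \<in> V\<close> unfolding F_def by auto
    then show ?thesis by (simp add: rinner_add_right)
  qed
  have "norm v \<le> 4 * real n / r" if "v \<in> V" for v
  proof (cases "v = 0")
    case False
    define c where "c = (r / 2) / norm v"
    have "norm (scaleR c v) < r" using False r by (simp add: c_def)
    then have "\<bar>rinner v (scaleR c v)\<bar> \<le> 2 * real n" using small \<open>v \<in> V\<close> by blast
    moreover have "rinner v (scaleR c v) = (r / 2) * norm v"
      using False by (simp add: rinner_scaleR_right rinner_self c_def power2_eq_square)
    ultimately show ?thesis using r by (simp add: field_simps)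
  qed (use r in simp)
  then show ?thesis by blast
qed

text \<open>Hellinger-Toeplitz: a symmetric map defined on the whole space is bounded.  The
  normalised images of T are weakly bounded, the pairing with y being at most the norm of T y.\<close>
theorem Hellinger_Toeplitz:
  fixes T :: "'a::complex_hilbert \<Rightarrow> 'a"
  assumes sym: "\<And>x y. rinner (T x) y = rinner x (T y)"
  shows "\<exists>K. \<forall>x. norm (T x) \<le> K * norm x"
proof -
  define V where "V = (\<lambda>x. scaleR (1 / norm x) (T x)) ` {x. x \<noteq> 0}"
  have "\<bar>rinner v y\<bar> \<le> norm (T y)" if "v \<in> V" for v y
  proof -
    obtain x where x: "x \<noteq> 0" "v = scaleR (1 / norm x) (T x)"
      using \<open>v \<in> V\<close> unfolding V_def by blast
    have "\<bar>rinner v y\<bar> = \<bar>rinner x (T y)\<bar> / norm x"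
      using x by (simp add: rinner_scaleR_left sym abs_mult)
    also have "\<dots> \<le> norm (T y)"
      using rinner_Cauchy_Schwarz[of x "T y"] x by (simp add: divide_le_eq mult.commute)
    finally show ?thesis .
  qed
  then obtain K where K: "\<And>v. v \<in> V \<Longrightarrow> norm v \<le> K"
    using weakly_bounded_imp_bounded[of V] by blast
  have "norm (T x) \<le> K * norm x" for x
  proof (cases "x = 0")
    case True
    have "(norm (T 0))\<^sup>2 = rinner 0 (T (T 0))" by (simp add: rinner_self[symmetric] sym)
    then show ?thesis using True by simp
  next
    case False
    then have "norm (T x) / norm x \<le> K" using K[of "scaleR (1 / norm x) (T x)"]
      by (simp add: V_def)
    then show ?thesis using False by (simp add: divide_le_eq mult.commute)
  qed
  then show ?thesis by blast
qed

section \<open>A boundedly invertible bounded operator has a closed domain\<close>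

text \<open>If S is additive on D, bounded on D, maps D onto the whole space and is bounded
  below on D, then D is closed: for a sequence in D converging to x, the images form a Cauchy
  sequence whose limit is the image of some y in D, and the lower bound forces the sequence
  to converge to y, so x = y.  (Equivalently: an operator with bounded inverse is closed, and a
  bounded closed operator has a closed domain.)\<close>
lemma closed_domain_if_boundedly_invertible:
  fixes S :: "'a::real_normed_vector \<Rightarrow> 'b::{real_normed_vector,complete_space}"
  assumes diff: "\<And>u v. u \<in> D \<Longrightarrow> v \<in> D \<Longrightarrow> u - v \<in> D \<and> S (u - v) = S u - S v"
    and bounded: "\<And>u. u \<in> D \<Longrightarrow> norm (S u) \<le> M * norm u"
    and onto: "S ` D = UNIV"
    and below: "\<And>u. u \<in> D \<Longrightarrow> norm u \<le> K * norm (S u)"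
  shows "closed D"
  unfolding closed_sequential_limits
proof (intro allI impI, elim conjE)
  fix s x assume s: "\<forall>n. s n \<in> D" and sx: "s \<longlonglongrightarrow> x"
  have "(max M 0)-lipschitz_on D S"
  proof (rule lipschitz_onI)
    fix u v assume uv: "u \<in> D" "v \<in> D"
    have "dist (S u) (S v) = norm (S (u - v))"
      using diff[OF uv] by (simp add: dist_norm)
    also have "\<dots> \<le> M * norm (u - v)"
      using bounded diff[OF uv] by blast
    also have "\<dots> \<le> max M 0 * dist u v"
      by (simp add: dist_norm mult_right_mono)
    finally show "dist (S u) (S v) \<le> max M 0 * dist u v" .
  qed simp
  then have "Cauchy (S \<circ> s)"
    using lipschitz_on_uniformly_continuous uniformly_continuous_imp_Cauchy_continuous
      LIMSEQ_imp_Cauchy[OF sx] s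
    unfolding Cauchy_continuous_on_def by blast
  then obtain w where w: "(S \<circ> s) \<longlonglongrightarrow> w"
    using Cauchy_convergent_iff convergent_def by blast
  obtain y where y: "y \<in> D" "S y = w" using onto by (metis UNIV_I imageE)
  have "(\<lambda>n. s n - y) \<longlonglongrightarrow> 0"
  proof (rule Lim_null_comparison)
    have "norm (s n - y) \<le> K * norm (S (s n) - w)" for n
      using below[of "s n - y"] diff[of "s n" y] s y by simp
    then show "\<forall>\<^sub>F n in sequentially. norm (s n - y) \<le> K * norm (S (s n) - w)"
      by (simp add: always_eventually)
    have "(\<lambda>n. S (s n) - w) \<longlonglongrightarrow> 0" using w by (simp add: LIM_zero o_def)
    then show "(\<lambda>n. K * norm (S (s n) - w)) \<longlonglongrightarrow> 0"
      by (intro tendsto_mult_right_zero tendsto_norm_zero)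
  qed
  then have "s \<longlonglongrightarrow> y" by (simp add: LIM_zero_iff)
  then have "x = y" using sx LIMSEQ_unique by blast
  then show "x \<in> D" using y by simp
qed

lemma dom_prod_op: "dom_op (prod_op S T) = {x \<in> dom_op T. app_op T x \<in> dom_op S}"
  by (simp add: prod_op_def dom_op_def)

lemma app_prod_op: "app_op (prod_op S T) x = app_op S (app_op T x)"
  by (simp add: prod_op_def app_op_def)

lemma linear_op_diff:
  assumes "linear_op T" "x \<in> dom_op T" "y \<in> dom_op T"
  shows "x - y \<in> dom_op T \<and> app_op T (x - y) = app_op T x - app_op T y"
  using assms unfolding linear_op_def
  by (metis cscale_minus_one cscale_one diff_conv_add_uminus)

lemma selfadjoint_symmetric:
  assumes "selfadjoint T" "x \<in> dom_op T" "y \<in> dom_op T"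
  shows "rinner (app_op T x) y = rinner x (app_op T y)"
proof -
  have "(y, app_op T y) \<in> adjoint_graph T"
    using assms unfolding selfadjoint_def graph_op_def by auto
  then show ?thesis using assms(2) unfolding adjoint_graph_def rinner_def by auto
qed

lemma selfadjoint_everywhere_defined_imp_bounded:
  assumes "selfadjoint T" "dom_op T = UNIV"
  shows "bounded_everywhere T"
  using Hellinger_Toeplitz[of "app_op T"] selfadjoint_symmetric[OF assms(1)] assms(2)
  unfolding bounded_everywhere_def by auto

text \<open>If AG is bounded and everywhere defined, then GA is bounded on its domain dom A:
  for w = GAx one has |w|^2 = (Ax, Gw) = (x, AGw), which is at most |x| |AG| |w|.\<close>
lemma reverse_product_bounded:
  fixes A G :: "'a::complex_hilbert op"
  assumes sA: "selfadjoint A" and sG: "selfadjoint G"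
    and AG: "bounded_everywhere (prod_op A G)"
  shows "\<exists>M. \<forall>x\<in>dom_op A. norm (app_op G (app_op A x)) \<le> M * norm x"
proof -
  have domG: "dom_op G = UNIV" and G_into_A: "\<And>z. app_op G z \<in> dom_op A"
    using AG by (auto simp: bounded_everywhere_def dom_prod_op)
  obtain K where K: "\<And>x. norm (app_op A (app_op G x)) \<le> K * norm x"
    using AG by (auto simp: bounded_everywhere_def app_prod_op)
  have "norm (app_op G (app_op A x)) \<le> max K 0 * norm x" if x: "x \<in> dom_op A" for x
  proof -
    define w where "w = app_op G (app_op A x)"
    have "(norm w)\<^sup>2 = rinner (app_op A x) (app_op G w)"
      using selfadjoint_symmetric[OF sG] domG by (simp add: w_def rinner_self[symmetric])
    also have "\<dots> = rinner x (app_op A (app_op G w))"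
      using selfadjoint_symmetric[OF sA x G_into_A] .
    also have "\<dots> \<le> norm x * norm (app_op A (app_op G w))"
      using rinner_Cauchy_Schwarz abs_le_iff by blast
    also have "\<dots> \<le> norm x * (max K 0 * norm w)"
    proof (intro mult_left_mono)
      have "K * norm w \<le> max K 0 * norm w" by (simp add: mult_right_mono)
      then show "norm (app_op A (app_op G w)) \<le> max K 0 * norm w" using K[of w] by linarith
    qed simp
    finally have "norm w * norm w \<le> (max K 0 * norm x) * norm w"
      by (simp add: power2_eq_square algebra_simps)
    then show ?thesis
      by (cases "w = 0") (auto simp: w_def)
  qed
  then show ?thesis by blast
qed

text \<open>The core of the theorem: if AG is bounded and everywhere defined and GA - l has a bounded
  everywhere defined inverse, then dom A is closed, hence all of H, and A and G are bounded.\<close>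
lemma bounded_if_product_bounded_and_resolvent:
  fixes A G :: "'a::complex_hilbert op"
  assumes sA: "selfadjoint A" and sG: "selfadjoint G"
    and AG: "bounded_everywhere (prod_op A G)" and l: "l \<in> resolvent_set (prod_op G A)"
  shows "bounded_everywhere A \<and> bounded_everywhere G"
proof -
  have linA: "linear_op A" and linG: "linear_op G" using sA sG by (auto simp: selfadjoint_def)
  have domG: "dom_op G = UNIV" using AG by (auto simp: bounded_everywhere_def dom_prod_op)
  obtain M where M: "\<And>x. x \<in> dom_op A \<Longrightarrow> norm (app_op G (app_op A x)) \<le> M * norm x"
    using reverse_product_bounded[OF sA sG AG] by blast
  define S where "S x = app_op G (app_op A x) - cscale l x" for x
  have "dom_op (prod_op G A) = dom_op A" using domG by (simp add: dom_prod_op)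
  then have onto: "S ` dom_op A = UNIV"
    and "\<exists>K. \<forall>x\<in>dom_op A. norm x \<le> K * norm (S x)"
    using l unfolding resolvent_set_def S_def by (auto simp: app_prod_op)
  then obtain K where below: "\<And>x. x \<in> dom_op A \<Longrightarrow> norm x \<le> K * norm (S x)" by blast
  have diff: "u - v \<in> dom_op A \<and> S (u - v) = S u - S v"
    if "u \<in> dom_op A" "v \<in> dom_op A" for u v
    using linear_op_diff[OF linA that] linear_op_diff[OF linG] domG
    by (simp add: S_def cscale_diff_right)
  have bounded: "norm (S u) \<le> (M + cmod l) * norm u" if "u \<in> dom_op A" for u
    using norm_triangle_ineq4[of "app_op G (app_op A u)" "cscale l u"] M[OF that]
    by (simp add: S_def norm_cscale algebra_simps)
  have "closed (dom_op A)"
    using closed_domain_if_boundedly_invertible[where D = "dom_op A" and S = S, OF diff bounded onto below] .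
  moreover have "closure (dom_op A) = UNIV"
    using sA by (simp add: selfadjoint_def densely_defined_def)
  ultimately have "dom_op A = UNIV" by (simp add: closure_closed)
  then show ?thesis
    using selfadjoint_everywhere_defined_imp_bounded sA sG domG by blast
qed

theorem mainTheorem4:
  fixes A G :: "'a::complex_hilbert op"
  assumes "selfadjoint A" and "selfadjoint G"
    and "bounded_everywhere (prod_op A G) \<or> bounded_everywhere (prod_op G A)"
  shows "(bounded_everywhere A \<and> bounded_everywhere G) \<or>
         \<not> (resolvent_set (prod_op A G) \<noteq> {} \<and> resolvent_set (prod_op G A) \<noteq> {})"
  using assms bounded_if_product_bounded_and_resolvent[of A G]
    bounded_if_product_bounded_and_resolvent[of G A]
  by blast

end
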